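(* Let $S\in(0,\infty]$ and let $\eta(t)$ and $H^n(t)$, $n\ge1$, be real-valued (jointly measurable) random processes with $\int_0^S\eta(t)^2\,dt<\infty$ a.s. and $\limsup_{n\to\infty}\int_0^S H^n(t)^2\,dt<\infty$ a.s. Suppose that $$\sup_{0\le t\le S}\Big|\int_0^t H^n\,ds\Big|\to_p 0,\qquad n\to\infty.$$ Then $$\sup_{0\le t\le S}\Big|\int_0^t H^n\eta\,ds\Big|\to_p 0,\qquad n\to\infty.$$
   Context: $\to_p$ denotes convergence in probability. *)

theory Defs
  imports "HOL-Probability.Probability"
begin

definition time_dom :: "ereal \<Rightarrow> real set" where
  "time_dom S = {t. 0 \<le> t \<and> ereal t \<le> S}"

text \<open>Convergence in probability to 0 of extended-real random variables, stated with
  outer probability (so no measurability of the events is presupposed).\<close>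
definition conv_prob_zero :: "'a measure \<Rightarrow> (nat \<Rightarrow> 'a \<Rightarrow> ereal) \<Rightarrow> bool" where
  "conv_prob_zero M X \<longleftrightarrow>
     (\<forall>e>0. \<forall>d>0. eventually (\<lambda>n. \<exists>A\<in>sets M.
        {\<omega>\<in>space M. ereal e < \<bar>X n \<omega>\<bar>} \<subseteq> A \<and> measure M A < d) sequentially)"

end

theory Submission
  imports Defs
begin

text \<open>For a fixed sample point the statement is deterministic: if the functions h_n are
  bounded in L^2 on the time domain and their primitives tend to 0 uniformly, then so do the
  primitives of h_n f, for every square integrable f. For the indicator of an interval this
  holds because the integral of h_n over an interval is a difference of two primitives. The
  class of admissible f is linear and, by the uniform L^2 bound and the inequality
  \<bar>\<integral> h g\<bar> \<le> (l \<parallel>h\<parallel>^2 + \<parallel>g\<parallel>^2 / l) / 2, closed under dominated limits; a Dynkin argument extends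
  it to indicators of bounded Borel sets, hence to simple functions and to all of L^2.

  The random statement follows by the subsequence criterion: every subsequence has a further
  subsequence along which the primitives of H^n vanish uniformly almost surely
  (Borel--Cantelli). Since the supremum over the uncountable time domain need not be
  measurable, it is controlled through rational times, using continuity of the primitives.\<close>

lemma sets_time_dom [measurable]: "time_dom S \<in> sets borel"
proof -
  have "time_dom S = {t\<in>space borel. 0 \<le> t \<and> ereal t \<le> S}"
    by (auto simp: time_dom_def)
  also have "\<dots> \<in> sets borel"
    by measurable
  finally show ?thesis .
qed

lemma atLeastAtMost_subset_time_dom: "t \<in> time_dom S \<Longrightarrow> {0..t} \<subseteq> time_dom S"
  by (auto simp: time_dom_def) (meson ereal_less_eq(3) order_trans)

lemma set_integrable_square_add:
  fixes f g :: "'a \<Rightarrow> real"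
  assumes [measurable]: "f \<in> borel_measurable M" "g \<in> borel_measurable M" "A \<in> sets M"
    and "set_integrable M A (\<lambda>s. (f s)\<^sup>2)" "set_integrable M A (\<lambda>s. (g s)\<^sup>2)"
  shows "set_integrable M A (\<lambda>s. (f s + g s)\<^sup>2)"
proof (rule set_integrable_bound)
  show "set_integrable M A (\<lambda>s. 2 * (f s)\<^sup>2 + 2 * (g s)\<^sup>2)"
    using assms by auto
  show "set_borel_measurable M A (\<lambda>s. (f s + g s)\<^sup>2)"
    unfolding set_borel_measurable_def by measurable
  have "(f s + g s)\<^sup>2 \<le> 2 * (f s)\<^sup>2 + 2 * (g s)\<^sup>2" for s
    using zero_le_power2[of "f s - g s"] by (simp add: power2_eq_square algebra_simps)
  then show "AE s in M. s \<in> A \<longrightarrow> norm ((f s + g s)\<^sup>2) \<le> norm (2 * (f s)\<^sup>2 + 2 * (g s)\<^sup>2)"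
    by auto
qed

lemma set_integral_mult_bound:
  fixes u v :: "'a \<Rightarrow> real"
  assumes [measurable]: "u \<in> borel_measurable M" "v \<in> borel_measurable M"
    and u: "set_integrable M A (\<lambda>s. (u s)\<^sup>2)" and v: "set_integrable M A (\<lambda>s. (v s)\<^sup>2)"
    and [measurable]: "A \<in> sets M" "B \<in> sets M" and "B \<subseteq> A" and "l > 0"
  shows "set_integrable M B (\<lambda>s. u s * v s)"
    and "\<bar>LINT s:B|M. u s * v s\<bar> \<le> (l * (LINT s:A|M. (u s)\<^sup>2) + (LINT s:A|M. (v s)\<^sup>2) / l) / 2"
proof -
  define q where "q s = (l * (u s)\<^sup>2 + (v s)\<^sup>2 / l) / 2" for s
  have qA: "set_integrable M A q"
    unfolding q_def using u v by auto
  have qB: "set_integrable M B q"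
    using set_integrable_subset[OF qA] \<open>B \<in> sets M\<close> \<open>B \<subseteq> A\<close> by blast
  have AM_GM: "\<bar>u s * v s\<bar> \<le> q s" for s
  proof -
    have "2 * l * \<bar>u s * v s\<bar> \<le> l * (l * (u s)\<^sup>2 + (v s)\<^sup>2 / l)"
      using \<open>l > 0\<close> zero_le_power2[of "l * \<bar>u s\<bar> - \<bar>v s\<bar>"]
      by (simp add: power2_eq_square algebra_simps abs_mult)
    then have "l * (2 * \<bar>u s * v s\<bar>) \<le> l * (l * (u s)\<^sup>2 + (v s)\<^sup>2 / l)"
      by (simp add: algebra_simps)
    then show ?thesis
      using \<open>l > 0\<close> unfolding q_def by simp
  qed
  show uv: "set_integrable M B (\<lambda>s. u s * v s)"
    by (rule set_integrable_bound[OF qB])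
      (auto simp: set_borel_measurable_def intro: order_trans[OF _ abs_ge_self] order_trans[OF AM_GM])
  have "\<bar>LINT s:B|M. u s * v s\<bar> \<le> (LINT s:B|M. \<bar>u s * v s\<bar>)"
    unfolding set_lebesgue_integral_def
    by (rule order_trans[OF integral_abs_bound]) (simp add: abs_mult)
  also have "\<dots> \<le> (LINT s:B|M. q s)"
    by (rule set_integral_mono[OF set_integrable_abs[OF uv] qB AM_GM])
  also have "\<dots> \<le> (LINT s:A|M. q s)"
    using qA qB \<open>B \<subseteq> A\<close> \<open>l > 0\<close> unfolding set_lebesgue_integral_def set_integrable_def
    by (intro integral_mono) (auto simp: q_def indicator_def)
  also have "\<dots> = (l * (LINT s:A|M. (u s)\<^sup>2) + (LINT s:A|M. (v s)\<^sup>2) / l) / 2"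
    unfolding q_def using u v by simp
  finally show "\<bar>LINT s:B|M. u s * v s\<bar> \<le> (l * (LINT s:A|M. (u s)\<^sup>2) + (LINT s:A|M. (v s)\<^sup>2) / l) / 2" .
qed

lemma set_integral_square_diff_tendsto_0:
  fixes g :: "nat \<Rightarrow> 'a \<Rightarrow> real" and f G :: "'a \<Rightarrow> real"
  assumes lim: "\<And>s. s \<in> A \<Longrightarrow> (\<lambda>k. g k s) \<longlonglongrightarrow> f s"
    and G2: "set_integrable M A (\<lambda>s. (G s)\<^sup>2)"
    and bound: "\<And>k s. s \<in> A \<Longrightarrow> \<bar>g k s - f s\<bar> \<le> G s"
    and [measurable]: "\<And>k. g k \<in> borel_measurable M" "f \<in> borel_measurable M" "A \<in> sets M"
  shows "(\<lambda>k. LINT s:A|M. (g k s - f s)\<^sup>2) \<longlonglongrightarrow> 0"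
  unfolding set_lebesgue_integral_def
proof (rule integral_dominated_convergence[where f = "\<lambda>s. 0" and w = "\<lambda>s. indicator A s *\<^sub>R (G s)\<^sup>2",
      THEN tendsto_eq_rhs])
  show "integrable M (\<lambda>s. indicator A s *\<^sub>R (G s)\<^sup>2)"
    using G2 unfolding set_integrable_def .
  show "AE s in M. (\<lambda>k. indicator A s *\<^sub>R (g k s - f s)\<^sup>2) \<longlonglongrightarrow> 0"
  proof (intro AE_I2)
    fix s
    show "(\<lambda>k. indicator A s *\<^sub>R (g k s - f s)\<^sup>2) \<longlonglongrightarrow> 0"
    proof (cases "s \<in> A")
      case True
      have "(\<lambda>k. (g k s - f s)\<^sup>2) \<longlonglongrightarrow> (f s - f s)\<^sup>2"
        by (intro tendsto_intros lim True)
      with True show ?thesis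
        by simp
    qed simp
  qed
  show "AE s in M. norm (indicator A s *\<^sub>R (g k s - f s)\<^sup>2) \<le> indicator A s *\<^sub>R (G s)\<^sup>2" for k
  proof (intro AE_I2)
    fix s
    show "norm (indicator A s *\<^sub>R (g k s - f s)\<^sup>2) \<le> indicator A s *\<^sub>R (G s)\<^sup>2"
      using bound[of s k] abs_le_square_iff[of "g k s - f s" "G s"] by (auto simp: indicator_def)
  qed
qed simp_all

lemma set_integral_Icc_diff:
  fixes f :: "real \<Rightarrow> real"
  assumes f: "set_integrable lborel {a..b} f" and "a \<le> u" "u \<le> v" "v \<le> b"
  shows "(LINT s:{u..v}|lborel. f s) = (LINT s:{a..v}|lborel. f s) - (LINT s:{a..u}|lborel. f s)"
proof -
  have on_subinterval: "set_integrable lborel {x..y} f" if "a \<le> x" "y \<le> b" for x y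
    by (rule set_integrable_subset[OF f]) (use that in auto)
  have "integral {a..u} f + integral {u..v} f = integral {a..v} f"
    using \<open>a \<le> u\<close> \<open>u \<le> v\<close> set_borel_integral_eq_integral(1)[OF on_subinterval[OF order_refl \<open>v \<le> b\<close>]]
    by (rule Henstock_Kurzweil_Integration.integral_combine)
  then show ?thesis
    using assms by (simp add: set_borel_integral_eq_integral(2)[OF on_subinterval])
qed

lemma set_integrable_square_of_nn_integral:
  fixes g :: "'a \<Rightarrow> real"
  assumes [measurable]: "g \<in> borel_measurable M" "A \<in> sets M"
    and finite: "(\<integral>\<^sup>+ s\<in>A. ennreal ((g s)\<^sup>2) \<partial>M) < \<infinity>"
  shows "set_integrable M A (\<lambda>s. (g s)\<^sup>2)"
    and "ennreal (LINT s:A|M. (g s)\<^sup>2) = (\<integral>\<^sup>+ s\<in>A. ennreal ((g s)\<^sup>2) \<partial>M)"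
proof -
  have eq: "(\<integral>\<^sup>+ s\<in>A. ennreal ((g s)\<^sup>2) \<partial>M) = (\<integral>\<^sup>+ s. ennreal (indicator A s *\<^sub>R (g s)\<^sup>2) \<partial>M)"
    by (rule nn_integral_cong) (auto simp: indicator_def)
  show int: "set_integrable M A (\<lambda>s. (g s)\<^sup>2)"
    unfolding set_integrable_def by (rule integrableI_bounded) (use finite eq in auto)
  show "ennreal (LINT s:A|M. (g s)\<^sup>2) = (\<integral>\<^sup>+ s\<in>A. ennreal ((g s)\<^sup>2) \<partial>M)"
    unfolding eq set_lebesgue_integral_def
    by (rule nn_integral_eq_integral[symmetric]) (use int in \<open>auto simp: set_integrable_def\<close>)
qed

lemma limsup_less_top_imp_eventually_bounded:
  fixes f :: "nat \<Rightarrow> ennreal"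
  assumes "limsup f < \<infinity>"
  obtains C where "C \<ge> 0" "eventually (\<lambda>n. f n \<le> ennreal C) sequentially"
proof -
  from assms obtain r where r: "r \<ge> 0" "limsup f = ennreal r"
    by (auto simp: less_top_ennreal)
  then have "limsup f < ennreal (r + 1)"
    by (simp add: ennreal_lessI)
  then have "eventually (\<lambda>n. f n < ennreal (r + 1)) sequentially"
    by (rule Limsup_lessD)
  then have "eventually (\<lambda>n. f n \<le> ennreal (r + 1)) sequentially"
    by (auto elim: eventually_mono)
  with r show ?thesis
    by (intro that[of "r + 1"]) auto
qed

section \<open>Primitives of products with a square integrable weight\<close>

locale vanishing_primitives =
  fixes D :: "real set" and h :: "nat \<Rightarrow> real \<Rightarrow> real" and C :: real
  assumes sets_D [measurable]: "D \<in> sets lborel"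
    and atLeastAtMost_subset: "\<And>t. t \<in> D \<Longrightarrow> {0..t} \<subseteq> D"
    and h_measurable [measurable]: "\<And>n. h n \<in> borel_measurable lborel"
    and h_square_integral_bounded: "eventually (\<lambda>n. set_integrable lborel D (\<lambda>s. (h n s)\<^sup>2) \<and>
          (LINT s:D|lborel. (h n s)\<^sup>2) \<le> C) sequentially"
    and primitives_vanish: "\<And>e. e > 0 \<Longrightarrow>
          eventually (\<lambda>n. \<forall>t\<in>D. \<bar>LINT s:{0..t}|lborel. h n s\<bar> \<le> e) sequentially"
begin

definition admissible :: "(real \<Rightarrow> real) \<Rightarrow> bool" where
  "admissible f \<longleftrightarrow> f \<in> borel_measurable lborel \<and> set_integrable lborel D (\<lambda>s. (f s)\<^sup>2) \<and>
     (\<forall>e>0. eventually (\<lambda>n. \<forall>t\<in>D. \<bar>LINT s:{0..t}|lborel. h n s * f s\<bar> \<le> e) sequentially)"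

lemma admissibleD:
  assumes "admissible f" "e > 0"
  shows "eventually (\<lambda>n. \<forall>t\<in>D. \<bar>LINT s:{0..t}|lborel. h n s * f s\<bar> \<le> e) sequentially"
  using assms unfolding admissible_def by blast

lemma set_integrable_h_mult:
  assumes "set_integrable lborel D (\<lambda>s. (h n s)\<^sup>2)" "f \<in> borel_measurable lborel"
    and "set_integrable lborel D (\<lambda>s. (f s)\<^sup>2)" "t \<in> D"
  shows "set_integrable lborel {0..t} (\<lambda>s. h n s * f s)"
  using set_integral_mult_bound(1)[of "h n" lborel f D "{0..t}" 1] assms atLeastAtMost_subset sets_D
  by simp

lemma set_integrable_h:
  assumes "set_integrable lborel D (\<lambda>s. (h n s)\<^sup>2)" "t \<in> D"
  shows "set_integrable lborel {0..t} (h n)"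
proof -
  have "set_integrable lborel {0..t} (\<lambda>s. (h n s)\<^sup>2)"
    by (rule set_integrable_subset[OF assms(1) _ atLeastAtMost_subset[OF assms(2)]]) simp
  moreover have "set_integrable lborel {0..t} (\<lambda>s. (1::real)\<^sup>2)"
    by (simp add: set_integrable_def integrable_indicator_iff emeasure_lborel_Icc_eq)
  ultimately show ?thesis
    using set_integral_mult_bound(1)[of "h n" lborel "\<lambda>_. 1" "{0..t}" "{0..t}" 1] by simp
qed

lemma admissible_zero: "admissible (\<lambda>s. 0)"
  unfolding admissible_def by (auto simp: set_integrable_def)

lemma admissible_add:
  assumes f: "admissible f" and g: "admissible g"
  shows "admissible (\<lambda>s. f s + g s)"
proof -
  have [measurable]: "f \<in> borel_measurable lborel" "g \<in> borel_measurable lborel"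
    and f2: "set_integrable lborel D (\<lambda>s. (f s)\<^sup>2)" and g2: "set_integrable lborel D (\<lambda>s. (g s)\<^sup>2)"
    using f g unfolding admissible_def by auto
  have "eventually (\<lambda>n. \<forall>t\<in>D. \<bar>LINT s:{0..t}|lborel. h n s * (f s + g s)\<bar> \<le> e) sequentially"
    if "e > 0" for e
  proof -
    have "eventually (\<lambda>n. \<forall>t\<in>D. \<bar>LINT s:{0..t}|lborel. h n s * f s\<bar> \<le> e/2) sequentially"
      and "eventually (\<lambda>n. \<forall>t\<in>D. \<bar>LINT s:{0..t}|lborel. h n s * g s\<bar> \<le> e/2) sequentially"
      using admissibleD[OF f, of "e/2"] admissibleD[OF g, of "e/2"] \<open>e > 0\<close> by simp_all
    with h_square_integral_bounded show ?thesis
    proof eventually_elim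
      case (elim n)
      show ?case
      proof
        fix t assume "t \<in> D"
        then have "(LINT s:{0..t}|lborel. h n s * (f s + g s)) =
            (LINT s:{0..t}|lborel. h n s * f s) + (LINT s:{0..t}|lborel. h n s * g s)"
          using elim set_integrable_h_mult[OF _ _ f2] set_integrable_h_mult[OF _ _ g2]
          by (simp add: distrib_left set_integral_add)
        moreover have "\<bar>LINT s:{0..t}|lborel. h n s * f s\<bar> \<le> e/2"
          and "\<bar>LINT s:{0..t}|lborel. h n s * g s\<bar> \<le> e/2"
          using elim \<open>t \<in> D\<close> by blast+
        ultimately show "\<bar>LINT s:{0..t}|lborel. h n s * (f s + g s)\<bar> \<le> e"
          by linarith
      qed
    qed
  qed
  then show ?thesis
    unfolding admissible_def using set_integrable_square_add[OF _ _ sets_D f2 g2] by auto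
qed

lemma admissible_cmult:
  assumes f: "admissible f"
  shows "admissible (\<lambda>s. c * f s)"
proof -
  have [measurable]: "f \<in> borel_measurable lborel"
    using f unfolding admissible_def by simp
  have "eventually (\<lambda>n. \<forall>t\<in>D. \<bar>LINT s:{0..t}|lborel. h n s * (c * f s)\<bar> \<le> e) sequentially"
    if "e > 0" for e
  proof -
    have "eventually (\<lambda>n. \<forall>t\<in>D. \<bar>LINT s:{0..t}|lborel. h n s * f s\<bar> \<le> e / (\<bar>c\<bar> + 1)) sequentially"
      using admissibleD[OF f] \<open>e > 0\<close> by (simp add: add_pos_nonneg)
    then show ?thesis
    proof eventually_elim
      case (elim n)
      show ?case
      proof
        fix t assume "t \<in> D"
        have "\<bar>LINT s:{0..t}|lborel. h n s * (c * f s)\<bar> = \<bar>c\<bar> * \<bar>LINT s:{0..t}|lborel. h n s * f s\<bar>"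
          by (simp add: mult.left_commute abs_mult)
        also have "\<dots> \<le> \<bar>c\<bar> * (e / (\<bar>c\<bar> + 1))"
          using elim \<open>t \<in> D\<close> by (intro mult_left_mono) auto
        also have "\<dots> \<le> e"
          using \<open>e > 0\<close> by (simp add: field_simps)
        finally show "\<bar>LINT s:{0..t}|lborel. h n s * (c * f s)\<bar> \<le> e" .
      qed
    qed
  qed
  moreover have "(\<lambda>s. c * f s) \<in> borel_measurable lborel"
    by measurable
  ultimately show ?thesis
    using f unfolding admissible_def by (simp add: power_mult_distrib)
qed

lemma admissible_sum:
  "finite I \<Longrightarrow> (\<And>i. i \<in> I \<Longrightarrow> admissible (f i)) \<Longrightarrow> admissible (\<lambda>s. \<Sum>i\<in>I. f i s)"
  by (induction I rule: finite_induct) (auto intro: admissible_add admissible_zero)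

lemma abs_primitive_mult_le:
  assumes h2: "set_integrable lborel D (\<lambda>s. (h n s)\<^sup>2)" and "(LINT s:D|lborel. (h n s)\<^sup>2) \<le> C"
    and [measurable]: "f \<in> borel_measurable lborel" "g \<in> borel_measurable lborel"
    and f2: "set_integrable lborel D (\<lambda>s. (f s)\<^sup>2)" and g2: "set_integrable lborel D (\<lambda>s. (g s)\<^sup>2)"
    and "t \<in> D" "l > 0"
  shows "\<bar>LINT s:{0..t}|lborel. h n s * f s\<bar> \<le>
    \<bar>LINT s:{0..t}|lborel. h n s * g s\<bar> + (l * C + (LINT s:D|lborel. (g s - f s)\<^sup>2) / l) / 2"
proof -
  have diff2: "set_integrable lborel D (\<lambda>s. (g s - f s)\<^sup>2)"
    using set_integrable_square_add[of g lborel "\<lambda>s. - f s" D] g2 f2 sets_D by simp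
  have "(LINT s:{0..t}|lborel. h n s * f s) =
      (LINT s:{0..t}|lborel. h n s * g s) - (LINT s:{0..t}|lborel. h n s * (g s - f s))"
  proof -
    have "set_integrable lborel {0..t} (\<lambda>s. h n s * g s)"
      and "set_integrable lborel {0..t} (\<lambda>s. h n s * (g s - f s))"
      using set_integrable_h_mult[OF h2 _ _ \<open>t \<in> D\<close>] g2 diff2 by simp_all
    from set_integral_diff(2)[OF this] show ?thesis
      by (simp add: algebra_simps)
  qed
  moreover have "\<bar>LINT s:{0..t}|lborel. h n s * (g s - f s)\<bar> \<le>
      (l * (LINT s:D|lborel. (h n s)\<^sup>2) + (LINT s:D|lborel. (g s - f s)\<^sup>2) / l) / 2"
    using set_integral_mult_bound(2)[of "h n" lborel "\<lambda>s. g s - f s" D "{0..t}" l]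
      assms diff2 atLeastAtMost_subset sets_D by simp
  moreover have "\<dots> \<le> (l * C + (LINT s:D|lborel. (g s - f s)\<^sup>2) / l) / 2"
    using assms by (intro divide_right_mono add_right_mono mult_left_mono) auto
  ultimately show ?thesis
    by linarith
qed

lemma admissible_L2_limit:
  fixes g :: "nat \<Rightarrow> real \<Rightarrow> real"
  assumes g: "\<And>k. admissible (g k)" and [measurable]: "f \<in> borel_measurable lborel"
    and f2: "set_integrable lborel D (\<lambda>s. (f s)\<^sup>2)"
    and L2: "(\<lambda>k. LINT s:D|lborel. (g k s - f s)\<^sup>2) \<longlonglongrightarrow> 0"
  shows "admissible f"
proof -
  have [measurable]: "g k \<in> borel_measurable lborel" and g2: "set_integrable lborel D (\<lambda>s. (g k s)\<^sup>2)" for k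
    using g unfolding admissible_def by simp_all
  have "eventually (\<lambda>n. \<forall>t\<in>D. \<bar>LINT s:{0..t}|lborel. h n s * f s\<bar> \<le> e) sequentially"
    if "e > 0" for e
  proof -
    define l where "l = e / (4 * max C 1)"
    have "l > 0" "l * C \<le> e / 4"
      using \<open>e > 0\<close> by (auto simp: l_def field_simps mult_left_mono)
    obtain k where "(LINT s:D|lborel. (g k s - f s)\<^sup>2) < e * l / 2"
      using order_tendstoD(2)[OF L2, of "e * l / 2"] \<open>e > 0\<close> \<open>l > 0\<close>
      by (auto simp: eventually_sequentially)
    with \<open>l > 0\<close> have "(LINT s:D|lborel. (g k s - f s)\<^sup>2) / l \<le> e / 2"
      by (simp add: divide_le_eq)
    with \<open>l * C \<le> e / 4\<close> have "(l * C + (LINT s:D|lborel. (g k s - f s)\<^sup>2) / l) / 2 \<le> (e / 4 + e / 2) / 2"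
      by (intro divide_right_mono add_mono) auto
    also have "\<dots> \<le> e / 2"
      using \<open>e > 0\<close> by simp
    finally have approx: "(l * C + (LINT s:D|lborel. (g k s - f s)\<^sup>2) / l) / 2 \<le> e / 2" .
    have "eventually (\<lambda>n. \<forall>t\<in>D. \<bar>LINT s:{0..t}|lborel. h n s * g k s\<bar> \<le> e/2) sequentially"
      using admissibleD[OF g[of k], of "e/2"] \<open>e > 0\<close> by simp
    with h_square_integral_bounded show ?thesis
    proof eventually_elim
      case (elim n)
      show ?case
      proof
        fix t assume "t \<in> D"
        with elim \<open>l > 0\<close> have "\<bar>LINT s:{0..t}|lborel. h n s * f s\<bar> \<le>
            \<bar>LINT s:{0..t}|lborel. h n s * g k s\<bar> + (l * C + (LINT s:D|lborel. (g k s - f s)\<^sup>2) / l) / 2"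
          by (intro abs_primitive_mult_le f2 g2) auto
        moreover have "\<bar>LINT s:{0..t}|lborel. h n s * g k s\<bar> \<le> e / 2"
          using elim \<open>t \<in> D\<close> by blast
        ultimately show "\<bar>LINT s:{0..t}|lborel. h n s * f s\<bar> \<le> e"
          using approx by linarith
      qed
    qed
  qed
  with f2 show ?thesis
    unfolding admissible_def by simp
qed

lemma admissible_dominated_limit:
  fixes g :: "nat \<Rightarrow> real \<Rightarrow> real" and f G :: "real \<Rightarrow> real"
  assumes g: "\<And>k. admissible (g k)" and f [measurable]: "f \<in> borel_measurable lborel"
    and lim: "\<And>s. s \<in> D \<Longrightarrow> (\<lambda>k. g k s) \<longlonglongrightarrow> f s"
    and G2: "set_integrable lborel D (\<lambda>s. (G s)\<^sup>2)"
    and bound: "\<And>k s. s \<in> D \<Longrightarrow> \<bar>g k s\<bar> \<le> G s"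
  shows "admissible f"
proof -
  have [measurable]: "g k \<in> borel_measurable lborel" for k
    using g unfolding admissible_def by simp
  have f_bound: "\<bar>f s\<bar> \<le> G s" if "s \<in> D" for s
    using LIMSEQ_le_const2[OF tendsto_rabs[OF lim[OF that]]] bound[OF that] by blast
  have f2: "set_integrable lborel D (\<lambda>s. (f s)\<^sup>2)"
  proof (rule set_integrable_bound[OF G2])
    show "set_borel_measurable lborel D (\<lambda>s. (f s)\<^sup>2)"
      unfolding set_borel_measurable_def by measurable
    have "(f s)\<^sup>2 \<le> (G s)\<^sup>2" if "s \<in> D" for s
      by (metis abs_ge_zero f_bound[OF that] power2_abs power_mono)
    then show "AE s in lborel. s \<in> D \<longrightarrow> norm ((f s)\<^sup>2) \<le> norm ((G s)\<^sup>2)"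
      by auto
  qed
  have "(\<lambda>k. LINT s:D|lborel. (g k s - f s)\<^sup>2) \<longlonglongrightarrow> 0"
  proof (rule set_integral_square_diff_tendsto_0[OF lim])
    show "set_integrable lborel D (\<lambda>s. (2 * G s)\<^sup>2)"
      using G2 by (simp add: power_mult_distrib)
    show "\<bar>g k s - f s\<bar> \<le> 2 * G s" if "s \<in> D" for k s
      using bound[OF that, of k] f_bound[OF that] by linarith
  qed (use sets_D in simp_all)
  then show ?thesis
    by (rule admissible_L2_limit[OF g f f2])
qed

lemma admissible_indicator_interval: "admissible (indicator {a..b})"
proof -
  have "integrable lborel (indicator {a..b} :: real \<Rightarrow> real)"
    by (simp add: integrable_indicator_iff emeasure_lborel_Icc_eq)
  then have "set_integrable lborel D (\<lambda>s. (indicator {a..b} s :: real)\<^sup>2)"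
    unfolding set_integrable_def
    by (rule Bochner_Integration.integrable_bound) (auto simp: indicator_def)
  moreover have "eventually (\<lambda>n. \<forall>t\<in>D. \<bar>LINT s:{0..t}|lborel. h n s * indicator {a..b} s\<bar> \<le> e) sequentially"
    if "e > 0" for e
    using h_square_integral_bounded primitives_vanish[OF half_gt_zero[OF \<open>e > 0\<close>]]
  proof eventually_elim
    case (elim n)
    show ?case
    proof
      fix t assume "t \<in> D"
      define u v where "u = max 0 a" and "v = min t b"
      have restrict: "(LINT s:{0..t}|lborel. h n s * indicator {a..b} s) = (LINT s:{u..v}|lborel. h n s)"
        unfolding set_lebesgue_integral_def u_def v_def
        by (rule Bochner_Integration.integral_cong) (auto simp: indicator_def)
      show "\<bar>LINT s:{0..t}|lborel. h n s * indicator {a..b} s\<bar> \<le> e"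
      proof (cases "u \<le> v")
        case False
        then show ?thesis
          using \<open>e > 0\<close> unfolding restrict by (simp add: set_lebesgue_integral_def)
      next
        case True
        have "0 \<le> u" "v \<le> t"
          unfolding u_def v_def by auto
        then have "u \<in> D" "v \<in> D"
          using atLeastAtMost_subset[OF \<open>t \<in> D\<close>] True by auto
        have "set_integrable lborel {0..t} (h n)"
          using set_integrable_h elim \<open>t \<in> D\<close> by blast
        then have "(LINT s:{u..v}|lborel. h n s) = (LINT s:{0..v}|lborel. h n s) - (LINT s:{0..u}|lborel. h n s)"
          using \<open>0 \<le> u\<close> True \<open>v \<le> t\<close> by (rule set_integral_Icc_diff)
        moreover have "\<bar>LINT s:{0..v}|lborel. h n s\<bar> \<le> e/2" "\<bar>LINT s:{0..u}|lborel. h n s\<bar> \<le> e/2"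
          using elim \<open>u \<in> D\<close> \<open>v \<in> D\<close> by auto
        ultimately show ?thesis
          unfolding restrict by linarith
      qed
    qed
  qed
  ultimately show ?thesis
    unfolding admissible_def by simp
qed

lemma admissible_indicator_disjoint_UN:
  fixes A :: "nat \<Rightarrow> real set"
  assumes "disjoint_family A" and IH: "\<And>i. admissible (indicator (A i \<inter> {-K..K}))"
    and "(\<Union>i. A i) \<in> sets borel"
  shows "admissible (indicator ((\<Union>i. A i) \<inter> {-K..K}))"
proof (rule admissible_dominated_limit[where g = "\<lambda>k s. \<Sum>i<k. indicator (A i \<inter> {-K..K}) s"])
  have disj: "A i \<inter> {-K..K} \<inter> (A j \<inter> {-K..K}) = {}" if "i \<noteq> j" for i j
    using \<open>disjoint_family A\<close> that unfolding disjoint_family_on_def by auto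
  show "admissible (\<lambda>s. \<Sum>i<k. indicator (A i \<inter> {-K..K}) s)" for k
    by (rule admissible_sum) (auto intro: IH)
  show "indicator ((\<Union>i. A i) \<inter> {-K..K}) \<in> borel_measurable lborel"
    using \<open>(\<Union>i. A i) \<in> sets borel\<close> by simp
  show "(\<lambda>k. \<Sum>i<k. indicator (A i \<inter> {-K..K}) s) \<longlonglongrightarrow> (indicator ((\<Union>i. A i) \<inter> {-K..K}) s :: real)" for s
    using indicator_sums[of "\<lambda>i. A i \<inter> {-K..K}", OF disj, of s] by (simp add: sums_def Int_UN_distrib2)
  show "set_integrable lborel D (\<lambda>s. (indicator {-K..K} s :: real)\<^sup>2)"
    using admissible_indicator_interval unfolding admissible_def by auto
  show "\<bar>\<Sum>i<k. indicator (A i \<inter> {-K..K}) s\<bar> \<le> (indicator {-K..K} s :: real)" for k s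
  proof -
    have "(\<Sum>i<k. indicator (A i \<inter> {-K..K}) s) = (indicator (\<Union>i<k. A i \<inter> {-K..K}) s :: real)"
      using disj by (intro indicator_UN_disjoint[symmetric]) (auto simp: disjoint_family_on_def)
    then show ?thesis
      by (auto simp: indicator_def)
  qed
qed

lemma admissible_indicator_bounded_borel:
  assumes "A \<in> sets borel"
  shows "admissible (indicator (A \<inter> {-K..K}))"
proof -
  define I where "I = range (\<lambda>(a, b). {a..b::real})"
  have "sets borel = sigma_sets UNIV I"
    unfolding I_def by (subst borel_eq_atLeastAtMost) (rule sets_measure_of, simp)
  have "Int_stable I"
    unfolding Int_stable_def I_def by (auto intro!: image_eqI[where x="(max _ _, min _ _)"])
  moreover have "I \<subseteq> Pow UNIV"
    by simp
  moreover have "A \<in> sigma_sets UNIV I"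
    using assms \<open>sets borel = sigma_sets UNIV I\<close> by simp
  ultimately show ?thesis
  proof (induction rule: sigma_sets_induct_disjoint)
    case (basic A)
    then show ?case
      using admissible_indicator_interval by (auto simp: I_def Int_atLeastAtMost)
  next
    case empty
    then show ?case
      using admissible_zero by (simp add: indicator_def)
  next
    case (compl A)
    have "indicator ((UNIV - A) \<inter> {-K..K}) =
        (\<lambda>s::real. indicator {-K..K} s + (-1) * indicator (A \<inter> {-K..K}) s :: real)"
      by (auto simp: indicator_def)
    then show ?case
      using admissible_add[OF admissible_indicator_interval[of "-K" K] admissible_cmult[OF compl.IH, of "-1"]]
      by simp
  next
    case (union A)
    have "range A \<subseteq> sets borel"
      using union.hyps(2) \<open>sets borel = sigma_sets UNIV I\<close> by simp
    then have "(\<Union>i. A i) \<in> sets borel"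
      by auto
    with union.hyps(1) union.IH show ?case
      by (rule admissible_indicator_disjoint_UN)
  qed
qed

lemma admissible_truncated_simple_function:
  assumes F: "simple_function lborel F"
  shows "admissible (\<lambda>s. indicator {-K..K} s * F s)"
proof -
  have "(\<lambda>s. indicator {-K..K} s * F s) = (\<lambda>s. \<Sum>y\<in>F ` UNIV. y * indicator (F -` {y} \<inter> {-K..K}) s)"
  proof
    fix s
    have "F s = (\<Sum>y\<in>F ` space lborel. indicator (F -` {y} \<inter> space lborel) s *\<^sub>R y)"
      by (rule simple_function_indicator_representation_banach[OF F]) simp
    then have "indicator {-K..K} s * F s =
        (\<Sum>y\<in>F ` space lborel. indicator {-K..K} s * (indicator (F -` {y} \<inter> space lborel) s *\<^sub>R y))"
      by (simp only: sum_distrib_left)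
    also have "\<dots> = (\<Sum>y\<in>F ` UNIV. y * indicator (F -` {y} \<inter> {-K..K}) s)"
      by (auto intro!: sum.cong simp: indicator_def)
    finally show "indicator {-K..K} s * F s = (\<Sum>y\<in>F ` UNIV. y * indicator (F -` {y} \<inter> {-K..K}) s)" .
  qed
  moreover have "admissible (\<lambda>s. \<Sum>y\<in>F ` UNIV. y * indicator (F -` {y} \<inter> {-K..K}) s)"
  proof (rule admissible_sum)
    show "finite (F ` UNIV)"
      using simple_functionD(1)[OF F] by simp
    show "admissible (\<lambda>s. y * indicator (F -` {y} \<inter> {-K..K}) s)" for y
      using simple_functionD(2)[OF F, of "{y}"]
      by (intro admissible_cmult admissible_indicator_bounded_borel) simp
  qed
  ultimately show ?thesis
    by (simp only:)
qed

lemma admissible_truncation: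
  assumes [measurable]: "f \<in> borel_measurable lborel" and f2: "set_integrable lborel D (\<lambda>s. (f s)\<^sup>2)"
  shows "admissible (\<lambda>s. indicator {-K..K} s * f s)"
proof -
  obtain F where F: "\<And>i. simple_function lborel (F i)" "\<And>s. (\<lambda>i. F i s) \<longlonglongrightarrow> f s"
    "\<And>i s. dist (F i s) 0 \<le> 2 * dist (f s) 0"
    using borel_measurable_implies_sequence_metric[OF assms(1), of 0] by auto
  show ?thesis
  proof (rule admissible_dominated_limit[where g = "\<lambda>i s. indicator {-K..K} s * F i s" and G = "\<lambda>s. 2 * \<bar>f s\<bar>"])
    show "admissible (\<lambda>s. indicator {-K..K} s * F i s)" for i
      using F(1) by (rule admissible_truncated_simple_function)
    show "(\<lambda>s. indicator {-K..K} s * f s) \<in> borel_measurable lborel"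
      by measurable
    show "(\<lambda>i. indicator {-K..K} s * F i s) \<longlonglongrightarrow> indicator {-K..K} s * f s" for s
      by (intro tendsto_mult_left F(2))
    show "set_integrable lborel D (\<lambda>s. (2 * \<bar>f s\<bar>)\<^sup>2)"
      using f2 by (simp add: power_mult_distrib)
    show "\<bar>indicator {-K..K} s * F i s\<bar> \<le> 2 * \<bar>f s\<bar>" for i s
      using F(3)[of i s] by (auto simp: indicator_def abs_mult)
  qed
qed

lemma admissible_if_square_integrable:
  assumes [measurable]: "f \<in> borel_measurable lborel" and f2: "set_integrable lborel D (\<lambda>s. (f s)\<^sup>2)"
  shows "admissible f"
proof (rule admissible_dominated_limit[where g = "\<lambda>k s. indicator {-real k..real k} s * f s" and G = "\<lambda>s. \<bar>f s\<bar>"])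
  show "admissible (\<lambda>s. indicator {-real k..real k} s * f s)" for k
    by (rule admissible_truncation[OF assms])
  show "(\<lambda>k. indicator {-real k..real k} s * f s) \<longlonglongrightarrow> f s" for s
  proof (rule tendsto_eventually)
    have "eventually (\<lambda>k. \<bar>s\<bar> \<le> real k) sequentially"
      using filterlim_real_sequentially by (simp add: filterlim_at_top)
    then show "eventually (\<lambda>k. indicator {-real k..real k} s * f s = f s) sequentially"
      by eventually_elim (auto simp: indicator_def)
  qed
  show "set_integrable lborel D (\<lambda>s. \<bar>f s\<bar>\<^sup>2)"
    using f2 by simp
  show "\<bar>indicator {-real k..real k} s * f s\<bar> \<le> \<bar>f s\<bar>" for k s
    by (auto simp: indicator_def)
qed fact

end

lemma primitives_of_products_vanish:
  fixes h :: "nat \<Rightarrow> real \<Rightarrow> real" and f :: "real \<Rightarrow> real"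
  assumes D [measurable]: "D \<in> sets lborel" and interval: "\<And>t. t \<in> D \<Longrightarrow> {0..t} \<subseteq> D"
    and h [measurable]: "\<And>n. h n \<in> borel_measurable lborel"
    and f [measurable]: "f \<in> borel_measurable lborel"
    and h2: "limsup (\<lambda>n. \<integral>\<^sup>+ s\<in>D. ennreal ((h n s)\<^sup>2) \<partial>lborel) < \<infinity>"
    and f2: "(\<integral>\<^sup>+ s\<in>D. ennreal ((f s)\<^sup>2) \<partial>lborel) < \<infinity>"
    and primitives: "\<And>e. e > 0 \<Longrightarrow> eventually (\<lambda>n. \<forall>t\<in>D. \<bar>LINT s:{0..t}|lborel. h n s\<bar> \<le> e) sequentially"
    and "e > 0"
  shows "eventually (\<lambda>n. \<forall>t\<in>D. \<bar>LINT s:{0..t}|lborel. h n s * f s\<bar> \<le> e) sequentially"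
proof -
  obtain C where "C \<ge> 0"
    and C: "eventually (\<lambda>n. (\<integral>\<^sup>+ s\<in>D. ennreal ((h n s)\<^sup>2) \<partial>lborel) \<le> ennreal C) sequentially"
    using limsup_less_top_imp_eventually_bounded[OF h2] .
  have "eventually (\<lambda>n. set_integrable lborel D (\<lambda>s. (h n s)\<^sup>2) \<and> (LINT s:D|lborel. (h n s)\<^sup>2) \<le> C) sequentially"
    using C
  proof eventually_elim
    case (elim n)
    then have "(\<integral>\<^sup>+ s\<in>D. ennreal ((h n s)\<^sup>2) \<partial>lborel) < \<infinity>"
      by (rule le_less_trans) simp
    note h2n = set_integrable_square_of_nn_integral[OF h D this]
    from elim \<open>C \<ge> 0\<close> show ?case
      using h2n(2)[symmetric] by (simp add: h2n(1) ennreal_le_iff)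
  qed
  then interpret vanishing_primitives D h C
    using D interval h primitives by unfold_locales simp_all
  have "admissible f"
    using set_integrable_square_of_nn_integral(1)[OF f D f2] by (rule admissible_if_square_integrable[OF f])
  then show ?thesis
    using \<open>e > 0\<close> by (rule admissibleD)
qed

section \<open>Convergence in probability along subsequences\<close>

lemma eventually_sequentially_subseqI:
  assumes "\<And>r::nat \<Rightarrow> nat. strict_mono r \<Longrightarrow> \<exists>r'. strict_mono r' \<and> eventually (\<lambda>j. P (r (r' j))) sequentially"
  shows "eventually P sequentially"
proof (rule ccontr)
  assume "\<not> eventually P sequentially"
  then obtain r :: "nat \<Rightarrow> nat" where "strict_mono r" and not_P: "\<And>n. \<not> P (r n)"
    using not_eventually_sequentiallyD by blast
  with assms obtain r' where "eventually (\<lambda>j. P (r (r' j))) sequentially"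
    by blast
  with not_P show False
    by (auto simp: eventually_sequentially)
qed

lemma measure_tendsto_0_if_AE_eventually_notin:
  assumes "finite_measure M" and E: "\<And>j. E j \<in> sets M"
    and AE: "AE \<omega> in M. eventually (\<lambda>j. \<omega> \<notin> E j) sequentially"
  shows "(\<lambda>j. measure M (E j)) \<longlonglongrightarrow> 0"
proof -
  interpret finite_measure M by fact
  define W where "W J = (\<Union>j\<in>{J..}. E j)" for J
  have W: "W J \<in> sets M" for J
    unfolding W_def using E by auto
  have "decseq W"
    unfolding W_def decseq_def by (intro allI impI UN_mono) auto
  then have "(\<lambda>J. measure M (W J)) \<longlonglongrightarrow> measure M (\<Inter>J. W J)"
    using W by (intro finite_Lim_measure_decseq) auto
  moreover have "(\<Inter>J. W J) \<in> null_sets M"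
  proof (subst AE_iff_null_sets)
    show "(\<Inter>J. W J) \<in> sets M"
      using W by auto
    show "AE \<omega> in M. \<omega> \<notin> (\<Inter>J. W J)"
      using AE by eventually_elim (auto simp: W_def eventually_sequentially)
  qed
  ultimately have W_lim: "(\<lambda>J. measure M (W J)) \<longlonglongrightarrow> 0"
    by (simp add: measure_def null_setsD1)
  have "measure M (E J) \<le> measure M (W J)" for J
    using W by (intro finite_measure_mono) (auto simp: W_def)
  then show ?thesis
    by (intro tendsto_sandwich[OF _ _ tendsto_const W_lim]) simp_all
qed

lemma measure_tendsto_0_subseq:
  assumes "finite_measure M" and E: "\<And>n. E n \<in> sets M"
    and subseq: "\<And>r :: nat \<Rightarrow> nat. strict_mono r \<Longrightarrow>
      \<exists>r'. strict_mono r' \<and> (AE \<omega> in M. eventually (\<lambda>j. \<omega> \<notin> E (r (r' j))) sequentially)"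
  shows "(\<lambda>n. measure M (E n)) \<longlonglongrightarrow> 0"
proof (rule order_tendstoI)
  fix d :: real assume "d > 0"
  show "eventually (\<lambda>n. measure M (E n) < d) sequentially"
  proof (rule eventually_sequentially_subseqI)
    fix r :: "nat \<Rightarrow> nat" assume "strict_mono r"
    then obtain r' :: "nat \<Rightarrow> nat"
      where "strict_mono r'" and "AE \<omega> in M. eventually (\<lambda>j. \<omega> \<notin> E (r (r' j))) sequentially"
      using subseq by blast
    then have "(\<lambda>j. measure M (E (r (r' j)))) \<longlonglongrightarrow> 0"
      by (intro measure_tendsto_0_if_AE_eventually_notin \<open>finite_measure M\<close> E)
    with \<open>strict_mono r'\<close> \<open>d > 0\<close> show "\<exists>r'. strict_mono r' \<and> eventually (\<lambda>j. measure M (E (r (r' j))) < d) sequentially"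
      using order_tendstoD(2) by blast
  qed
next
  fix d :: real assume "d < 0"
  then show "eventually (\<lambda>n. d < measure M (E n)) sequentially"
    by (intro always_eventually allI) (simp add: less_le_trans[OF _ measure_nonneg])
qed

lemma conv_prob_zeroI_subseq:
  assumes "finite_measure M"
    and sets: "\<And>e n. e > 0 \<Longrightarrow> E e n \<in> sets M"
    and cover: "\<And>e n. e > 0 \<Longrightarrow> {\<omega>\<in>space M. ereal e < \<bar>X n \<omega>\<bar>} \<subseteq> E e n"
    and subseq: "\<And>e (r :: nat \<Rightarrow> nat). e > 0 \<Longrightarrow> strict_mono r \<Longrightarrow>
      \<exists>r' :: nat \<Rightarrow> nat. strict_mono r' \<and> (AE \<omega> in M. eventually (\<lambda>j. \<omega> \<notin> E e (r (r' j))) sequentially)"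
  shows "conv_prob_zero M X"
  unfolding conv_prob_zero_def
proof (intro allI impI)
  fix e d :: real assume "e > 0" "d > 0"
  have "(\<lambda>n. measure M (E e n)) \<longlonglongrightarrow> 0"
    using sets subseq \<open>e > 0\<close> by (intro measure_tendsto_0_subseq \<open>finite_measure M\<close>) auto
  from order_tendstoD(2)[OF this \<open>d > 0\<close>]
  show "eventually (\<lambda>n. \<exists>A\<in>sets M. {\<omega>\<in>space M. ereal e < \<bar>X n \<omega>\<bar>} \<subseteq> A \<and> measure M A < d) sequentially"
    by eventually_elim (use sets cover \<open>e > 0\<close> in blast)
qed

lemma conv_prob_zero_subseq:
  "conv_prob_zero M Y \<Longrightarrow> strict_mono r \<Longrightarrow> conv_prob_zero M (\<lambda>j. Y (r j))"
  unfolding conv_prob_zero_def by (auto intro: eventually_subseq)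

lemma conv_prob_zero_fast_subseq:
  assumes "conv_prob_zero M Y"
  obtains m :: "nat \<Rightarrow> nat" and A :: "nat \<Rightarrow> 'a set"
  where "strict_mono m" "\<And>j. A j \<in> sets M"
    "\<And>j. {\<omega>\<in>space M. ereal (1 / Suc j) < \<bar>Y (m j) \<omega>\<bar>} \<subseteq> A j" "\<And>j. measure M (A j) < (1/2)^j"
proof -
  have "\<exists>N. \<forall>k\<ge>N. \<exists>A\<in>sets M. {\<omega>\<in>space M. ereal (1 / Suc j) < \<bar>Y k \<omega>\<bar>} \<subseteq> A \<and> measure M A < (1/2)^j" for j
  proof -
    have "eventually (\<lambda>k. \<exists>A\<in>sets M. {\<omega>\<in>space M. ereal (1 / Suc j) < \<bar>Y k \<omega>\<bar>} \<subseteq> A \<and> measure M A < (1/2)^j) sequentially"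
      using assms unfolding conv_prob_zero_def by simp
    then show ?thesis
      by (simp add: eventually_sequentially)
  qed
  then obtain N where N: "\<And>j k. k \<ge> N j \<Longrightarrow>
      \<exists>A\<in>sets M. {\<omega>\<in>space M. ereal (1 / Suc j) < \<bar>Y k \<omega>\<bar>} \<subseteq> A \<and> measure M A < (1/2)^j"
    by metis
  define m where "m j = j + (\<Sum>i\<le>j. N i)" for j
  have "strict_mono m"
    unfolding strict_mono_Suc_iff m_def by simp
  have "N j \<le> m j" for j
    unfolding m_def using member_le_sum[of j "{..j}" N] by simp
  then have "\<exists>A. A \<in> sets M \<and> {\<omega>\<in>space M. ereal (1 / Suc j) < \<bar>Y (m j) \<omega>\<bar>} \<subseteq> A \<and> measure M A < (1/2)^j" for j
    using N[of j "m j"] by blast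
  then obtain A where "\<And>j. A j \<in> sets M"
    "\<And>j. {\<omega>\<in>space M. ereal (1 / Suc j) < \<bar>Y (m j) \<omega>\<bar>} \<subseteq> A j" "\<And>j. measure M (A j) < (1/2)^j"
    by metis
  with \<open>strict_mono m\<close> show ?thesis
    by (rule that)
qed

lemma conv_prob_zero_AE_subseq:
  assumes "prob_space M" "conv_prob_zero M Y"
  obtains m :: "nat \<Rightarrow> nat"
  where "strict_mono m" "AE \<omega> in M. \<forall>e>0. eventually (\<lambda>j. \<bar>Y (m j) \<omega>\<bar> \<le> ereal e) sequentially"
proof -
  interpret prob_space M
    by fact
  obtain m A where "strict_mono m" and A: "\<And>j. A j \<in> sets M"
    "\<And>j. {\<omega>\<in>space M. ereal (1 / Suc j) < \<bar>Y (m j) \<omega>\<bar>} \<subseteq> A j" "\<And>j. measure M (A j) < (1/2)^j"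
    using conv_prob_zero_fast_subseq[OF assms(2)] by blast
  have "summable (\<lambda>j. measure M (A j))"
    by (rule summable_comparison_test[OF _ summable_geometric[of "1/2"]]) (use A(3) less_imp_le in auto)
  then have "AE \<omega> in M. eventually (\<lambda>j. \<omega> \<in> space M - A j) sequentially"
    by (intro borel_cantelli_AE1 A(1)) (simp add: emeasure_eq_measure)
  then have "AE \<omega> in M. \<forall>e>0. eventually (\<lambda>j. \<bar>Y (m j) \<omega>\<bar> \<le> ereal e) sequentially"
  proof eventually_elim
    case (elim \<omega>)
    show ?case
    proof (intro allI impI)
      fix e :: real assume "e > 0"
      have "eventually (\<lambda>j. inverse (real (Suc j)) < e) sequentially"
        by (rule order_tendstoD(2)[OF LIMSEQ_inverse_real_of_nat \<open>e > 0\<close>])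
      with elim show "eventually (\<lambda>j. \<bar>Y (m j) \<omega>\<bar> \<le> ereal e) sequentially"
      proof eventually_elim
        case (elim j)
        then have "\<bar>Y (m j) \<omega>\<bar> \<le> ereal (1 / Suc j)"
          using A(2)[of j] by (auto simp: not_less[symmetric])
        also have "\<dots> \<le> ereal e"
          using elim by (simp add: inverse_eq_divide)
        finally show ?case .
      qed
    qed
  qed
  with \<open>strict_mono m\<close> show ?thesis
    by (rule that)
qed

section \<open>Suprema of primitives over the time domain\<close>

lemma exists_rational_abs_primitive_gt:
  fixes \<phi> :: "real \<Rightarrow> real"
  assumes "t \<in> time_dom S" "ereal t < S"
    and integrable: "\<And>T. T \<in> time_dom S \<Longrightarrow> set_integrable lborel {0..T} \<phi>"
    and "e < \<bar>LINT s:{0..t}|lborel. \<phi> s\<bar>"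
  shows "\<exists>q\<in>time_dom S. q \<in> \<rat> \<and> e < \<bar>LINT s:{0..q}|lborel. \<phi> s\<bar>"
proof -
  have "0 \<le> t"
    using assms(1) by (simp add: time_dom_def)
  obtain T where "t < T" "ereal T < S"
    using ereal_dense2[OF assms(2)] by force
  with \<open>0 \<le> t\<close> have "T \<in> time_dom S"
    by (simp add: time_dom_def)
  define g where "g x = \<bar>integral {0..x} \<phi>\<bar>" for x
  have primitive: "(LINT s:{0..x}|lborel. \<phi> s) = integral {0..x} \<phi>" if "x \<in> {0..T}" for x
    using set_integrable_subset[OF integrable[OF \<open>T \<in> time_dom S\<close>]] that
    by (intro set_borel_integral_eq_integral(2)) auto
  have "continuous_on {0..T} g"
    unfolding g_def using set_borel_integral_eq_integral(1)[OF integrable[OF \<open>T \<in> time_dom S\<close>]]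
    by (intro continuous_intros indefinite_integral_continuous_1)
  moreover have "t \<in> {0..T}" "e < g t"
    using \<open>0 \<le> t\<close> \<open>t < T\<close> assms(4) primitive[of t] by (auto simp: g_def)
  ultimately obtain \<delta> where "\<delta> > 0" and \<delta>: "\<And>x. x \<in> {0..T} \<Longrightarrow> dist x t < \<delta> \<Longrightarrow> dist (g x) (g t) < g t - e"
    unfolding continuous_on_iff by (metis diff_gt_0_iff_gt)
  obtain q where "q \<in> \<rat>" "t < q" "q < min (t + \<delta>) T"
    using Rats_dense_in_real[of t "min (t + \<delta>) T"] \<open>\<delta> > 0\<close> \<open>t < T\<close> by auto
  then have "q \<in> {0..T}" "e < g q"
    using \<open>0 \<le> t\<close> \<delta>[of q] by (auto simp: dist_real_def)
  moreover have "q \<in> time_dom S"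
    using atLeastAtMost_subset_time_dom[OF \<open>T \<in> time_dom S\<close>] \<open>q \<in> {0..T}\<close> by auto
  ultimately show ?thesis
    using \<open>q \<in> \<rat>\<close> primitive[of q] by (auto simp: g_def)
qed

text \<open>A measurable stand-in for the event that the primitive of u v exceeds e somewhere on
  the time domain: for square integrable u and v only rational times and the endpoint are
  inspected, which by continuity of the primitive loses nothing.\<close>

definition large_primitive :: "ereal \<Rightarrow> real \<Rightarrow> (real \<Rightarrow> real) \<Rightarrow> (real \<Rightarrow> real) \<Rightarrow> bool" where
  "large_primitive S e u v \<longleftrightarrow>
     (\<integral>\<^sup>+ s\<in>time_dom S. ennreal ((u s)\<^sup>2) \<partial>lborel) = \<infinity> \<or>
     (\<integral>\<^sup>+ s\<in>time_dom S. ennreal ((v s)\<^sup>2) \<partial>lborel) = \<infinity> \<or>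
     (\<exists>q\<in>time_dom S. (q \<in> \<rat> \<or> ereal q = S) \<and> e < \<bar>LINT s:{0..q}|lborel. u s * v s\<bar>)"

lemma sets_large_primitive:
  fixes u v :: "'a \<Rightarrow> real \<Rightarrow> real"
  assumes [measurable]: "(\<lambda>p. u (fst p) (snd p)) \<in> borel_measurable (M \<Otimes>\<^sub>M lborel)"
    and [measurable]: "(\<lambda>p. v (fst p) (snd p)) \<in> borel_measurable (M \<Otimes>\<^sub>M lborel)"
  shows "{\<omega>\<in>space M. large_primitive S e (u \<omega>) (v \<omega>)} \<in> sets M"
proof -
  define Q where "Q = {q \<in> time_dom S. q \<in> \<rat> \<or> ereal q = S}"
  have "countable Q"
    using countable_rat by (intro countable_subset[of Q "\<rat> \<union> {real_of_ereal S}"]) (auto simp: Q_def)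
  have [measurable]: "(\<lambda>\<omega>. LINT s:{0..q}|lborel. u \<omega> s * v \<omega> s) \<in> borel_measurable M" for q
    unfolding set_lebesgue_integral_def by measurable
  have "{\<omega>\<in>space M. large_primitive S e (u \<omega>) (v \<omega>)} =
      {\<omega>\<in>space M. (\<integral>\<^sup>+ s\<in>time_dom S. ennreal ((u \<omega> s)\<^sup>2) \<partial>lborel) = \<infinity>} \<union>
      {\<omega>\<in>space M. (\<integral>\<^sup>+ s\<in>time_dom S. ennreal ((v \<omega> s)\<^sup>2) \<partial>lborel) = \<infinity>} \<union>
      (\<Union>q\<in>Q. {\<omega>\<in>space M. e < \<bar>LINT s:{0..q}|lborel. u \<omega> s * v \<omega> s\<bar>})"
    unfolding large_primitive_def Q_def by auto
  also have "\<dots> \<in> sets M"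
    using \<open>countable Q\<close> by (intro sets.Un sets.countable_UN'') measurable
  finally show ?thesis .
qed

lemma large_primitive_if_sup_gt:
  fixes u v :: "real \<Rightarrow> real"
  assumes "S > 0" and [measurable]: "u \<in> borel_measurable lborel" "v \<in> borel_measurable lborel"
    and sup: "ereal e < \<bar>SUP t\<in>time_dom S. ereal \<bar>LINT s:{0..t}|lborel. u s * v s\<bar>\<bar>"
  shows "large_primitive S e u v"
proof (rule ccontr)
  assume "\<not> large_primitive S e u v"
  then have u2: "(\<integral>\<^sup>+ s\<in>time_dom S. ennreal ((u s)\<^sup>2) \<partial>lborel) < \<infinity>"
    and v2: "(\<integral>\<^sup>+ s\<in>time_dom S. ennreal ((v s)\<^sup>2) \<partial>lborel) < \<infinity>"
    and small: "\<And>q. q \<in> time_dom S \<Longrightarrow> q \<in> \<rat> \<or> ereal q = S \<Longrightarrow> \<bar>LINT s:{0..q}|lborel. u s * v s\<bar> \<le> e"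
    unfolding large_primitive_def by (auto simp: less_top not_less)
  have integrable: "set_integrable lborel {0..T} (\<lambda>s. u s * v s)" if "T \<in> time_dom S" for T
    using set_integral_mult_bound(1)[of u lborel v "time_dom S" "{0..T}" 1]
      set_integrable_square_of_nn_integral(1)[OF _ _ u2] set_integrable_square_of_nn_integral(1)[OF _ _ v2]
      atLeastAtMost_subset_time_dom[OF that]
    by simp
  have "0 \<in> time_dom S"
    using \<open>S > 0\<close> by (simp add: time_dom_def zero_ereal_def[symmetric] less_imp_le)
  then have "0 \<le> (SUP t\<in>time_dom S. ereal \<bar>LINT s:{0..t}|lborel. u s * v s\<bar>)"
    by (rule SUP_upper2) simp
  with sup obtain t where t: "t \<in> time_dom S" "e < \<bar>LINT s:{0..t}|lborel. u s * v s\<bar>"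
    by (auto simp: less_SUP_iff abs_ereal_ge0)
  show False
  proof (cases "ereal t = S")
    case True
    with t small show False
      by force
  next
    case False
    with t(1) have "ereal t < S"
      by (simp add: time_dom_def order_less_le)
    from exists_rational_abs_primitive_gt[OF t(1) this integrable t(2)] small show False
      by force
  qed
qed

lemma eventually_not_large_primitive:
  fixes h :: "nat \<Rightarrow> real \<Rightarrow> real" and f :: "real \<Rightarrow> real"
  assumes h [measurable]: "\<And>n. h n \<in> borel_measurable lborel"
    and f [measurable]: "f \<in> borel_measurable lborel"
    and h2: "limsup (\<lambda>n. \<integral>\<^sup>+ s\<in>time_dom S. ennreal ((h n s)\<^sup>2) \<partial>lborel) < \<infinity>"
    and f2: "(\<integral>\<^sup>+ s\<in>time_dom S. ennreal ((f s)\<^sup>2) \<partial>lborel) < \<infinity>"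
    and sup: "\<And>e. e > 0 \<Longrightarrow>
      eventually (\<lambda>n. \<bar>SUP t\<in>time_dom S. ereal \<bar>LINT s:{0..t}|lborel. h n s\<bar>\<bar> \<le> ereal e) sequentially"
    and "e > 0"
  shows "eventually (\<lambda>n. \<not> large_primitive S e (h n) f) sequentially"
proof -
  have "eventually (\<lambda>n. \<forall>t\<in>time_dom S. \<bar>LINT s:{0..t}|lborel. h n s\<bar> \<le> e') sequentially"
    if "e' > 0" for e'
    using sup[OF that]
  proof eventually_elim
    case (elim n)
    show ?case
    proof
      fix t assume "t \<in> time_dom S"
      then have "ereal \<bar>LINT s:{0..t}|lborel. h n s\<bar> \<le> (SUP t\<in>time_dom S. ereal \<bar>LINT s:{0..t}|lborel. h n s\<bar>)"
        by (rule SUP_upper)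
      also have "\<dots> \<le> \<bar>SUP t\<in>time_dom S. ereal \<bar>LINT s:{0..t}|lborel. h n s\<bar>\<bar>"
        by (cases "SUP t\<in>time_dom S. ereal \<bar>LINT s:{0..t}|lborel. h n s\<bar>") auto
      also have "\<dots> \<le> ereal e'"
        by (rule elim)
      finally show "\<bar>LINT s:{0..t}|lborel. h n s\<bar> \<le> e'"
        by simp
    qed
  qed
  then have "eventually (\<lambda>n. \<forall>t\<in>time_dom S. \<bar>LINT s:{0..t}|lborel. h n s * f s\<bar> \<le> e) sequentially"
    using primitives_of_products_vanish[OF _ atLeastAtMost_subset_time_dom h f h2 f2 _ \<open>e > 0\<close>] by simp
  moreover have "eventually (\<lambda>n. (\<integral>\<^sup>+ s\<in>time_dom S. ennreal ((h n s)\<^sup>2) \<partial>lborel) < \<infinity>) sequentially"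
    using h2 by (rule Limsup_lessD)
  ultimately show ?thesis
    unfolding large_primitive_def by eventually_elim (use f2 in force)
qed

theorem lemma2p4:
  fixes M :: "'a measure" and S :: ereal
    and \<eta> :: "'a \<Rightarrow> real \<Rightarrow> real" and H :: "nat \<Rightarrow> 'a \<Rightarrow> real \<Rightarrow> real"
  assumes "prob_space M"
    and "S > 0"
    and "(\<lambda>p. \<eta> (fst p) (snd p)) \<in> borel_measurable (M \<Otimes>\<^sub>M lborel)"
    and "\<And>n. (\<lambda>p. H n (fst p) (snd p)) \<in> borel_measurable (M \<Otimes>\<^sub>M lborel)"
    and "AE \<omega> in M. (\<integral>\<^sup>+ s\<in>time_dom S. ennreal ((\<eta> \<omega> s)\<^sup>2) \<partial>lborel) < \<infinity>"
    and "AE \<omega> in M. limsup (\<lambda>n. \<integral>\<^sup>+ s\<in>time_dom S. ennreal ((H n \<omega> s)\<^sup>2) \<partial>lborel) < \<infinity>"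
    and "conv_prob_zero M (\<lambda>n \<omega>. SUP t\<in>time_dom S.
            ereal \<bar>set_lebesgue_integral lborel {0..t} (H n \<omega>)\<bar>)"
  shows "conv_prob_zero M (\<lambda>n \<omega>. SUP t\<in>time_dom S.
            ereal \<bar>set_lebesgue_integral lborel {0..t} (\<lambda>s. H n \<omega> s * \<eta> \<omega> s)\<bar>)"
proof -
  interpret prob_space M
    by fact
  have sections: "H n \<omega> \<in> borel_measurable lborel" "\<eta> \<omega> \<in> borel_measurable lborel"
    if "\<omega> \<in> space M" for n \<omega>
    using measurable_Pair2[OF assms(4) that] measurable_Pair2[OF assms(3) that] by simp_all
  show ?thesis
  proof (rule conv_prob_zeroI_subseq[where E = "\<lambda>e n. {\<omega>\<in>space M. large_primitive S e (H n \<omega>) (\<eta> \<omega>)}"])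
    show "{\<omega>\<in>space M. large_primitive S e (H n \<omega>) (\<eta> \<omega>)} \<in> sets M" for e n
      using assms(4) assms(3) by (rule sets_large_primitive)
    show "{\<omega>\<in>space M. ereal e < \<bar>SUP t\<in>time_dom S. ereal \<bar>LINT s:{0..t}|lborel. H n \<omega> s * \<eta> \<omega> s\<bar>\<bar>}
        \<subseteq> {\<omega>\<in>space M. large_primitive S e (H n \<omega>) (\<eta> \<omega>)}" for e n
      using large_primitive_if_sup_gt[OF assms(2) sections] by auto
  next
    fix e :: real and r :: "nat \<Rightarrow> nat" assume "e > 0" "strict_mono r"
    obtain m where "strict_mono m" and primitives: "AE \<omega> in M. \<forall>e>0. eventually (\<lambda>j.
        \<bar>SUP t\<in>time_dom S. ereal \<bar>LINT s:{0..t}|lborel. H (r (m j)) \<omega> s\<bar>\<bar> \<le> ereal e) sequentially"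
      using conv_prob_zero_AE_subseq[OF assms(1) conv_prob_zero_subseq[OF assms(7) \<open>strict_mono r\<close>]] .
    have "AE \<omega> in M. eventually (\<lambda>j. \<not> large_primitive S e (H (r (m j)) \<omega>) (\<eta> \<omega>)) sequentially"
      using primitives assms(5,6) AE_space
    proof eventually_elim
      case (elim \<omega>)
      have "limsup (\<lambda>j. \<integral>\<^sup>+ s\<in>time_dom S. ennreal ((H (r (m j)) \<omega> s)\<^sup>2) \<partial>lborel) < \<infinity>"
        using limsup_subseq_mono[OF strict_mono_o[OF \<open>strict_mono r\<close> \<open>strict_mono m\<close>],
            of "\<lambda>n. \<integral>\<^sup>+ s\<in>time_dom S. ennreal ((H n \<omega> s)\<^sup>2) \<partial>lborel"] elim(3)
        by (simp add: o_def)
      with elim show ?case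
        by (intro eventually_not_large_primitive sections \<open>e > 0\<close>) auto
    qed
    with \<open>strict_mono m\<close> show "\<exists>r'. strict_mono r' \<and> (AE \<omega> in M. eventually
        (\<lambda>j. \<omega> \<notin> {\<omega>\<in>space M. large_primitive S e (H (r (r' j)) \<omega>) (\<eta> \<omega>)}) sequentially)"
      by auto
  qed (rule finite_measure_axioms)
qed

end
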